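(* $$\sum_{m,n=1}^\infty\frac{(-1)^n}{m^2\,n\,(m+n)^2}=\zeta(\overline{3},\overline{2})+\zeta(\overline{4},\overline{1})+\zeta(4,\overline{1})=\frac{107}{32}\zeta(5)-\frac{5}{16}\pi^2\zeta(3).$$
   Context: $\zeta$ denotes the Riemann zeta function. For positive integers $s,t$: $\zeta(\overline{s},\overline{t}):=\sum_{m>n\ge1}\frac{(-1)^{m+n}}{m^s n^t}$ and $\zeta(s,\overline{t}):=\sum_{m>n\ge1}\frac{(-1)^{n}}{m^s n^t}$. *)

theory Defs
  imports "HOL-Analysis.Analysis"
begin

text \<open>Riemann zeta function at an integer argument s (meaningful for s \<ge> 2).\<close>
definition zeta :: "nat \<Rightarrow> real" where
  "zeta s = (\<Sum>n. 1 / real (Suc n) ^ s)"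

definition zeta_bb :: "nat \<Rightarrow> nat \<Rightarrow> real" where
  "zeta_bb s t = (\<Sum>\<^sub>\<infinity>(m,n)\<in>{(m,n). m > n \<and> n \<ge> (1::nat)}.
       (-1) ^ (m + n) / (real m ^ s * real n ^ t))"

definition zeta_nb :: "nat \<Rightarrow> nat \<Rightarrow> real" where
  "zeta_nb s t = (\<Sum>\<^sub>\<infinity>(m,n)\<in>{(m,n). m > n \<and> n \<ge> (1::nat)}.
       (-1) ^ n / (real m ^ s * real n ^ t))"

end

theory Submission
  imports Defs
begin

(*
  (1) Partial fractions.  With M = m + n,
        1/(m^2 n M^2) = 1/(M^3 m^2) + 1/(M^4 m) + 1/(M^4 n),
      and re-indexing each piece by (M, m) or (M, n) turns the double sum over m, n \<ge> 1
      into zeta2 3 (-1) 2 (-1) + zeta2 4 (-1) 1 (-1) + zeta2 4 1 1 (-1)  (has_sum_target).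

  (2) Evaluation by the double shuffle relations of weight 5: the stuffle (harmonic product)
      and shuffle (partial fraction) expansions of zeta1 2 s * zeta1 3 t, the distribution
      relation of zeta2 2 _ 3 _, and a sum formula obtained by summing t^n/(m (m+n) n^3) in two
      ways.  Together with zeta1 k (-1) = (2^(1-k) - 1) zeta(k) and zeta(2) = pi^2/6 these form
      a linear system whose solution is the stated value (target_value).
*)

definition strict_pairs :: "(nat \<times> nat) set" where
  "strict_pairs = {(m,n). m > n \<and> n \<ge> 1}"

definition zeta1 :: "nat \<Rightarrow> real \<Rightarrow> real" where
  "zeta1 k s = (\<Sum>\<^sub>\<infinity>n\<in>{1..}. s ^ n / real n ^ k)"

definition zeta2 :: "nat \<Rightarrow> real \<Rightarrow> nat \<Rightarrow> real \<Rightarrow> real" where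
  "zeta2 a s b t = (\<Sum>\<^sub>\<infinity>(m,n)\<in>strict_pairs. s ^ m * t ^ n / (real m ^ a * real n ^ b))"

lemma zeta_bb_eq_zeta2: "zeta_bb a b = zeta2 a (-1) b (-1)"
  unfolding zeta_bb_def zeta2_def strict_pairs_def
  by (intro infsum_cong) (auto simp: power_add)

lemma zeta_nb_eq_zeta2: "zeta_nb a b = zeta2 a 1 b (-1)"
  unfolding zeta_nb_def zeta2_def strict_pairs_def
  by (intro infsum_cong) auto

lemma sign_square: "\<bar>s\<bar> = 1 \<Longrightarrow> s * s = (1::real)"
  by (metis abs_mult_self_eq mult_1)

lemma has_sum_product:
  fixes f :: "'a \<Rightarrow> real" and g :: "'b \<Rightarrow> real"
  assumes f: "f summable_on A" and g: "g summable_on B"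
  shows "((\<lambda>(x,y). f x * g y) has_sum (infsum f A * infsum g B)) (A \<times> B)"
proof -
  have fa: "(\<lambda>x. \<bar>f x\<bar>) summable_on A" and ga: "(\<lambda>y. \<bar>g y\<bar>) summable_on B"
    using f g summable_on_iff_abs_summable_on_real by auto
  have "(\<lambda>x. \<bar>f x\<bar> * (\<Sum>\<^sub>\<infinity>y\<in>B. \<bar>g y\<bar>)) summable_on A"
    using fa by (rule summable_on_cmult_left)
  moreover have "(\<lambda>y. \<bar>f x\<bar> * \<bar>g y\<bar>) summable_on B" for x
    using ga by (rule summable_on_cmult_right)
  ultimately have "(\<lambda>p. norm ((\<lambda>(x,y). f x * g y) p)) summable_on (A \<times> B)"
    by (subst Infinite_Sum.abs_summable_on_Sigma_iff)
       (simp add: abs_mult infsum_cmult_right' infsum_nonneg)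
  then have fg: "(\<lambda>(x,y). f x * g y) summable_on (A \<times> B)"
    using summable_on_iff_abs_summable_on_real by blast
  have "infsum (\<lambda>(x,y). f x * g y) (A \<times> B) = (\<Sum>\<^sub>\<infinity>x\<in>A. \<Sum>\<^sub>\<infinity>y\<in>B. f x * g y)"
    using infsum_Sigma_banach[OF fg] by simp
  also have "\<dots> = infsum f A * infsum g B"
    by (simp add: infsum_cmult_right' infsum_cmult_left')
  finally show ?thesis using fg by (metis has_sum_infsum)
qed

lemma double_term_bound:
  assumes "1 \<le> n" "n < m" "2 \<le> a" "1 \<le> b"
  shows "1 / (real m ^ a * real n ^ b) \<le> real m powr (-(3/2)) * real n powr (-(3/2))"
proof -
  have mn: "1 \<le> real n" "real n \<le> real m" using assms by auto
  have sqrt_n: "real n powr (3/2) = real n powr (1/2) * real n"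
    using mn powr_add[of "real n" "1/2" 1] by simp
  have sqrt_m: "real m powr (3/2) * real m powr (1/2) = real m ^ 2"
    using mn powr_add[of "real m" "3/2" "1/2"] by simp
  have "real m powr (3/2) * real n powr (3/2) = real m powr (3/2) * (real n powr (1/2) * real n)"
    by (simp add: sqrt_n)
  also have "\<dots> \<le> real m powr (3/2) * (real m powr (1/2) * real n)"
  proof -
    have "real n powr (1/2) \<le> real m powr (1/2)"
      using mn by (intro powr_mono2) auto
    then have "real n powr (1/2) * real n \<le> real m powr (1/2) * real n"
      by (rule mult_right_mono) simp
    then show ?thesis
      by (rule mult_left_mono) (rule powr_ge_zero)
  qed
  also have "\<dots> = real m ^ 2 * real n"
    by (subst mult.assoc[symmetric]) (simp only: sqrt_m)
  also have "\<dots> \<le> real m ^ a * real n ^ b"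
  proof (rule mult_mono)
    show "real m ^ 2 \<le> real m ^ a" using mn assms by (intro power_increasing) auto
    show "real n \<le> real n ^ b" using mn assms power_increasing[of 1 b "real n"] by simp
  qed simp_all
  finally have "real m powr (3/2) * real n powr (3/2) \<le> real m ^ a * real n ^ b" .
  then have "1 / (real m ^ a * real n ^ b) \<le> 1 / (real m powr (3/2) * real n powr (3/2))"
    using mn by (intro divide_left_mono mult_pos_pos) simp_all
  also have "\<dots> = real m powr (-(3/2)) * real n powr (-(3/2))"
    by (simp only: powr_minus divide_inverse inverse_mult_distrib mult_1_left)
  finally show ?thesis .
qed

lemma has_sum_zeta2:
  fixes s t :: real
  assumes "2 \<le> a" "1 \<le> b" "\<bar>s\<bar> = 1" "\<bar>t\<bar> = 1"
  shows "((\<lambda>(m,n). s ^ m * t ^ n / (real m ^ a * real n ^ b)) has_sum zeta2 a s b t) strict_pairs"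
proof -
  have decay: "(\<lambda>n::nat. real n powr (-(3/2))) summable_on UNIV"
    by (intro summable_nonneg_imp_summable_on) (auto simp: summable_real_powr_iff)
  have "(\<lambda>(m,n). real m powr (-(3/2)) * real n powr (-(3/2))) summable_on UNIV \<times> UNIV"
    using has_sum_product[OF decay decay] by (rule has_sum_imp_summable)
  then have "(\<lambda>(m,n). real m powr (-(3/2)) * real n powr (-(3/2))) summable_on strict_pairs"
    by (rule summable_on_subset) simp
  then have "(\<lambda>p. norm ((\<lambda>(m,n). s ^ m * t ^ n / (real m ^ a * real n ^ b)) p)) summable_on strict_pairs"
  proof (rule Infinite_Sum.abs_summable_on_comparison_test')
    fix p assume "p \<in> strict_pairs"
    then obtain m n where "p = (m,n)" "1 \<le> n" "n < m" by (auto simp: strict_pairs_def)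
    moreover have "norm (s ^ m * t ^ n / (real m ^ a * real n ^ b)) = 1 / (real m ^ a * real n ^ b)"
      using assms by (simp add: abs_mult power_abs)
    ultimately show "norm ((\<lambda>(m,n). s ^ m * t ^ n / (real m ^ a * real n ^ b)) p)
               \<le> (\<lambda>(m,n). real m powr (-(3/2)) * real n powr (-(3/2))) p"
      using double_term_bound[of n m a b] assms by (simp only: prod.case)
  qed
  then have "(\<lambda>(m,n). s ^ m * t ^ n / (real m ^ a * real n ^ b)) summable_on strict_pairs"
    by (rule abs_summable_summable)
  then show ?thesis
    unfolding zeta2_def by (rule has_sum_infsum)
qed

lemma has_sum_zeta1:
  fixes s :: real
  assumes "2 \<le> k" "\<bar>s\<bar> = 1"
  shows "((\<lambda>n. s ^ n / real n ^ k) has_sum zeta1 k s) {1..}"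
proof -
  have "(\<lambda>n. 1 / real n ^ k) summable_on {1..}"
    using inverse_power_summable[OF assms(1), where 'a=real]
    by (intro summable_nonneg_imp_summable_on summable_on_subset[of _ UNIV]) (auto simp: divide_inverse)
  then have "(\<lambda>n. norm (s ^ n / real n ^ k)) summable_on {1..}"
    by (rule Infinite_Sum.abs_summable_on_comparison_test') (use assms in \<open>simp add: power_abs\<close>)
  then have "(\<lambda>n. s ^ n / real n ^ k) summable_on {1..}"
    by (rule abs_summable_summable)
  then show ?thesis
    unfolding zeta1_def by (rule has_sum_infsum)
qed

text \<open>Special values: \<open>zeta1 k 1 = \<zeta>(k)\<close>, and summing the plus and minus series leaves the even
  terms, which gives \<open>zeta1 k (-1) = (2^(1-k) - 1) \<zeta>(k)\<close>; finally Euler's \<open>\<zeta>(2) = \<pi>\<^sup>2/6\<close>.\<close>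
lemma zeta1_one:
  assumes "2 \<le> k"
  shows "zeta1 k 1 = zeta k"
proof -
  have "((\<lambda>n. 1 / real n ^ k) has_sum zeta1 k 1) {1..}"
    using has_sum_zeta1[OF assms, of 1] by simp
  then have "((\<lambda>n. 1 / real (Suc n) ^ k) has_sum zeta1 k 1) UNIV"
    by (rule has_sum_reindex_bij_witness[where i=Suc and j="\<lambda>n. n - 1", THEN iffD1, rotated -1]) auto
  then have "(\<lambda>n. 1 / real (Suc n) ^ k) sums zeta1 k 1"
    by (rule has_sum_imp_sums)
  then show ?thesis
    unfolding zeta_def by (simp add: sums_iff)
qed

lemma zeta1_minus_one:
  assumes "2 \<le> k"
  shows "zeta1 k (-1) = (2 / 2 ^ k - 1) * zeta k"
proof -
  have "((\<lambda>n. 1 ^ n / real n ^ k + (-1) ^ n / real n ^ k) has_sum (zeta1 k 1 + zeta1 k (-1))) {1..}"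
    by (intro has_sum_add has_sum_zeta1 assms) auto
  moreover have "((\<lambda>n. 1 ^ n / real n ^ k + (-1) ^ n / real n ^ k) has_sum (2 / 2 ^ k * zeta1 k 1)) {1..}"
  proof (rule has_sum_cong_neutral[THEN iffD1, of _ "{n. even n \<and> n \<ge> 1}"])
    show "((\<lambda>n. 1 ^ n / real n ^ k + (-1) ^ n / real n ^ k) has_sum (2 / 2 ^ k * zeta1 k 1)) {n. even n \<and> n \<ge> 1}"
      using has_sum_cmult_right[OF has_sum_zeta1[OF assms, of 1], of "2 / 2 ^ k"]
      by (rule has_sum_reindex_bij_witness[where i="\<lambda>n. n div 2" and j="\<lambda>n. 2 * n", THEN iffD1, rotated -1])
         (auto simp: power_mult_distrib)
  qed auto
  ultimately show ?thesis
    using zeta1_one[OF assms] has_sum_unique by (auto simp: algebra_simps)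
qed

lemma zeta_two: "zeta 2 = pi ^ 2 / 6"
proof -
  have "(\<lambda>n. 1 / real (Suc n) ^ 2) sums (pi ^ 2 / 6)"
    using inverse_squares_sums by (simp add: add.commute)
  then show ?thesis unfolding zeta_def by (simp add: sums_iff)
qed

text \<open>The substitutions \<open>(m, n) \<mapsto> (m + n, n)\<close> and \<open>(m, n) \<mapsto> (m + n, m)\<close> are bijections from
  \<open>{1..} \<times> {1..}\<close> onto \<open>strict_pairs\<close>; they let us expand products and partial
  fractions over unrestricted pairs and recognise the pieces as double zeta values.\<close>
lemma has_sum_shift_pairs:
  "((\<lambda>(m,n). G (m + n) n) has_sum X) ({1..} \<times> {1..}) \<longleftrightarrow> ((\<lambda>(M,n). G M n) has_sum X) strict_pairs"
  by (rule has_sum_reindex_bij_witness[where j="\<lambda>(m,n). (m + n, n)" and i="\<lambda>(M,n). (M - n, n)"])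
     (auto simp: strict_pairs_def)

lemma has_sum_shift_pairs_swap:
  "((\<lambda>(m,n). G (m + n) m) has_sum X) ({1..} \<times> {1..}) \<longleftrightarrow> ((\<lambda>(M,n). G M n) has_sum X) strict_pairs"
  by (rule has_sum_reindex_bij_witness[where j="\<lambda>(m,n). (m + n, m)" and i="\<lambda>(M,k). (k, M - k)"])
     (auto simp: strict_pairs_def)

text \<open>A double zeta value written over unrestricted pairs, in the two shifted forms.  Since
  \<open>s^(m+n) u^n = s^m (s u)^n\<close>, the signs appear as \<open>s\<close> and \<open>s u\<close>.\<close>
lemma has_sum_zeta2_shifted:
  fixes s u :: real
  assumes "2 \<le> a" "1 \<le> b" "\<bar>s\<bar> = 1" "\<bar>u\<bar> = 1"
  shows "((\<lambda>(m,n). s ^ m * (s * u) ^ n / (real (m + n) ^ a * real n ^ b)) has_sum zeta2 a s b u) ({1..} \<times> {1..})"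
    and "((\<lambda>(m,n). s ^ n * (s * u) ^ m / (real (m + n) ^ a * real m ^ b)) has_sum zeta2 a s b u) ({1..} \<times> {1..})"
  using has_sum_zeta2[OF assms]
    has_sum_shift_pairs[where G="\<lambda>M n. s ^ M * u ^ n / (real M ^ a * real n ^ b)"]
    has_sum_shift_pairs_swap[where G="\<lambda>M n. s ^ M * u ^ n / (real M ^ a * real n ^ b)"]
  by (simp_all add: power_add power_mult_distrib mult_ac)

lemma has_sum_zeta1_product:
  fixes s t :: real
  assumes "2 \<le> a" "2 \<le> b" "\<bar>s\<bar> = 1" "\<bar>t\<bar> = 1"
  shows "((\<lambda>(m,n). s ^ m / real m ^ a * (t ^ n / real n ^ b)) has_sum (zeta1 a s * zeta1 b t)) ({1..} \<times> {1..})"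
  using has_sum_product[OF has_sum_imp_summable[OF has_sum_zeta1[OF assms(1,3)]]
                           has_sum_imp_summable[OF has_sum_zeta1[OF assms(2,4)]]]
  unfolding zeta1_def .


text \<open>Linearity of \<open>has_sum\<close> for summands written with a pattern \<open>\<lambda>(m,n)\<close>, so that
  sums of several shifted double zeta series can be assembled by \<open>intro\<close>.\<close>
lemma has_sum_add_pairs:
  fixes f g :: "'a \<Rightarrow> 'b \<Rightarrow> real"
  assumes "((\<lambda>(m,n). f m n) has_sum x) A" "((\<lambda>(m,n). g m n) has_sum y) A"
  shows "((\<lambda>(m,n). f m n + g m n) has_sum (x + y)) A"
  using has_sum_add[OF assms] by (simp add: case_prod_unfold)

lemma has_sum_cmult_pairs:
  fixes f :: "'a \<Rightarrow> 'b \<Rightarrow> real"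
  assumes "((\<lambda>(m,n). f m n) has_sum x) A"
  shows "((\<lambda>(m,n). c * f m n) has_sum (c * x)) A"
  using has_sum_cmult_right[OF assms, of c] by (simp add: case_prod_unfold)

text \<open>Stuffle (harmonic product): split \<open>{1..} \<times> {1..}\<close> into \<open>m > n\<close>, \<open>m < n\<close> and the diagonal.\<close>
lemma stuffle:
  fixes s t :: real
  assumes "2 \<le> a" "2 \<le> b" "\<bar>s\<bar> = 1" "\<bar>t\<bar> = 1"
  shows "zeta1 a s * zeta1 b t = zeta2 a s b t + zeta2 b t a s + zeta1 (a + b) (s * t)"
proof -
  define F where "F = (\<lambda>(m,n). s ^ m / real m ^ a * (t ^ n / real n ^ b))"
  have below: "(F has_sum zeta2 a s b t) strict_pairs"
    using has_sum_zeta2[of a b s t] assms by (simp add: F_def)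
  have above: "(F has_sum zeta2 b t a s) {(m,n). m < n \<and> 1 \<le> m}"
    using has_sum_zeta2[of b a t s] assms
    by (rule_tac has_sum_reindex_bij_witness[where j="\<lambda>(m,n). (n,m)" and i="\<lambda>(m,n). (n,m)", THEN iffD1])
       (auto simp: F_def strict_pairs_def mult_ac)
  have diagonal: "(F has_sum zeta1 (a + b) (s * t)) {(n,n) | n. 1 \<le> n}"
    using has_sum_zeta1[of "a + b" "s * t"] assms
    by (rule_tac has_sum_reindex_bij_witness[where j="\<lambda>n. (n,n)" and i=fst, THEN iffD1])
       (auto simp: F_def abs_mult power_add power_mult_distrib)
  have "(F has_sum (zeta2 a s b t + zeta2 b t a s + zeta1 (a + b) (s * t)))
          (strict_pairs \<union> {(m,n). m < n \<and> 1 \<le> m} \<union> {(n,n) | n. 1 \<le> n})"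
    by (intro has_sum_Un_disjoint below above diagonal) (auto simp: strict_pairs_def)
  moreover have "strict_pairs \<union> {(m,n). m < n \<and> 1 \<le> m} \<union> {(n,n) | n. 1 \<le> n} = {1..} \<times> {1..}"
    by (auto simp: strict_pairs_def)
  ultimately have "(F has_sum (zeta2 a s b t + zeta2 b t a s + zeta1 (a + b) (s * t))) ({1..} \<times> {1..})"
    by simp
  moreover have "(F has_sum (zeta1 a s * zeta1 b t)) ({1..} \<times> {1..})"
    unfolding F_def using assms by (rule has_sum_zeta1_product)
  ultimately show ?thesis using has_sum_unique by blast
qed

text \<open>Shuffle: the partial fraction expansion of \<open>1/(x\<^sup>2 y\<^sup>3)\<close> in terms of \<open>x + y\<close>, applied to each
  term of \<open>zeta1 2 s * zeta1 3 t\<close>.\<close>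
lemma shuffle_fraction:
  fixes x y c :: real
  assumes "x \<noteq> 0" "y \<noteq> 0" "x + y \<noteq> 0"
  shows "c / (x^2 * y^3) = c / ((x+y)^2 * y^3) + 2 * c / ((x+y)^3 * y^2) + 3 * c / ((x+y)^4 * y)
           + c / ((x+y)^3 * x^2) + 3 * c / ((x+y)^4 * x)"
  using assms by (simp add: field_split_simps) algebra

lemma shuffle:
  fixes s t :: real
  assumes s: "\<bar>s\<bar> = 1" and t: "\<bar>t\<bar> = 1"
  shows "zeta1 2 s * zeta1 3 t = zeta2 2 s 3 (s * t) + 2 * zeta2 3 s 2 (s * t) + 3 * zeta2 4 s 1 (s * t)
                                + zeta2 3 t 2 (s * t) + 3 * zeta2 4 t 1 (s * t)"
    (is "_ = ?rhs")
proof -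
  have st: "\<bar>s * t\<bar> = 1" "s * (s * t) = t" "t * (s * t) = s"
    using sign_square[OF s] sign_square[OF t] s t by (simp_all add: abs_mult flip: mult.assoc)
  define S where "S = (\<lambda>(m,n). s ^ m * (s * (s * t)) ^ n / (real (m + n) ^ 2 * real n ^ 3)
        + 2 * (s ^ m * (s * (s * t)) ^ n / (real (m + n) ^ 3 * real n ^ 2))
        + 3 * (s ^ m * (s * (s * t)) ^ n / (real (m + n) ^ 4 * real n ^ 1))
        + t ^ n * (t * (s * t)) ^ m / (real (m + n) ^ 3 * real m ^ 2)
        + 3 * (t ^ n * (t * (s * t)) ^ m / (real (m + n) ^ 4 * real m ^ 1)))"
  have sum_S: "(S has_sum ?rhs) ({1..} \<times> {1..})"
    unfolding S_def by (intro has_sum_add_pairs has_sum_cmult_pairs has_sum_zeta2_shifted s t st) auto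
  have S_eq: "S (m,n) = s ^ m / real m ^ 2 * (t ^ n / real n ^ 3)" if "1 \<le> m" "1 \<le> n" for m n
    using shuffle_fraction[of "real m" "real n" "s ^ m * t ^ n"] that by (simp add: S_def st sign_square[OF t] mult_ac)
  have "((\<lambda>(m,n). s ^ m / real m ^ 2 * (t ^ n / real n ^ 3)) has_sum ?rhs) ({1..} \<times> {1..})"
    using sum_S by (rule has_sum_cong[THEN iffD1, rotated]) (auto simp: S_eq)
  moreover have "((\<lambda>(m,n). s ^ m / real m ^ 2 * (t ^ n / real n ^ 3)) has_sum (zeta1 2 s * zeta1 3 t)) ({1..} \<times> {1..})"
    using s t by (intro has_sum_zeta1_product) auto
  ultimately show ?thesis using has_sum_unique by blast
qed


text \<open>Distribution relation: the four sign choices add up to the even-even terms, i.e. to a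
  rescaled \<open>zeta2 a 1 b 1\<close>.\<close>
lemma distribution:
  assumes "2 \<le> a" "1 \<le> b"
  shows "zeta2 a 1 b 1 + zeta2 a 1 b (-1) + zeta2 a (-1) b 1 + zeta2 a (-1) b (-1) = 4 / 2 ^ (a + b) * zeta2 a 1 b 1"
    (is "?lhs = _")
proof -
  define F where "F = (\<lambda>(m::nat,n::nat). (if even m \<and> even n then 4 else 0) / (real m ^ a * real n ^ b))"
  have "((\<lambda>(m,n). 1 ^ m * 1 ^ n / (real m ^ a * real n ^ b) + 1 ^ m * (-1) ^ n / (real m ^ a * real n ^ b)
          + (-1) ^ m * 1 ^ n / (real m ^ a * real n ^ b) + (-1) ^ m * (-1) ^ n / (real m ^ a * real n ^ b))
        has_sum ?lhs) strict_pairs"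
    using assms by (intro has_sum_add_pairs has_sum_zeta2) auto
  then have "(F has_sum ?lhs) strict_pairs"
    by (rule has_sum_cong[THEN iffD1, rotated])
       (auto simp: F_def simp flip: add_divide_distrib split: if_splits)
  moreover have "(F has_sum (4 / 2 ^ (a + b) * zeta2 a 1 b 1)) strict_pairs"
  proof (rule has_sum_cong_neutral[THEN iffD1, of _ "{(m,n). (m,n) \<in> strict_pairs \<and> even m \<and> even n}"])
    show "(F has_sum (4 / 2 ^ (a + b) * zeta2 a 1 b 1)) {(m,n). (m,n) \<in> strict_pairs \<and> even m \<and> even n}"
      using has_sum_cmult_right[OF has_sum_zeta2[of a b 1 1], of "4 / 2 ^ (a + b)"] assms
      by (rule_tac has_sum_reindex_bij_witness[where j="\<lambda>(m,n). (2 * m, 2 * n)" and i="\<lambda>(m,n). (m div 2, n div 2)", THEN iffD1])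
         (auto simp: strict_pairs_def F_def power_mult_distrib power_add)
  qed (auto simp: F_def split: if_splits)
  ultimately show ?thesis using has_sum_unique by blast
qed

lemma has_sum_inverse_product:
  assumes "1 \<le> n"
  shows "((\<lambda>m. 1 / (real m * real (m + n))) has_sum (harm n / real n)) {1..}"
proof -
  have telescope: "(\<lambda>j. 1 / real (j + Suc i) - 1 / real (Suc j + Suc i)) sums (1 / real (Suc i))" for i
  proof -
    have "(\<lambda>j. 1 / real (j + Suc i)) \<longlonglongrightarrow> 0"
      using LIMSEQ_ignore_initial_segment[OF lim_inverse_n', of "Suc i"] by simp
    from telescope_sums'[OF this] show ?thesis by simp
  qed
  have "(\<lambda>j. \<Sum>i<n. 1 / real (j + Suc i) - 1 / real (Suc j + Suc i)) sums (\<Sum>i<n. 1 / real (Suc i))"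
    by (rule sums_sum) (rule telescope)
  moreover have "(\<Sum>i<n. 1 / real (j + Suc i) - 1 / real (Suc j + Suc i)) = 1 / real (Suc j) - 1 / real (Suc j + n)" for j
    using sum_lessThan_telescope'[of "\<lambda>i. 1 / real (j + Suc i)" n] by simp
  moreover have "(\<Sum>i<n. 1 / real (Suc i)) = harm n"
    by (simp add: harm_altdef inverse_eq_divide)
  ultimately have "(\<lambda>j. (1 / real (Suc j) - 1 / real (Suc j + n)) / real n) sums (harm n / real n)"
    by (simp add: sums_divide)
  moreover have "(1 / real (Suc j) - 1 / real (Suc j + n)) / real n = 1 / (real (Suc j) * real (Suc j + n))" for j
  proof -
    have "1 / x - 1 / (x + real n) = real n / (x * (x + real n))" if "x > 0" for x :: real
      using that assms by (simp add: field_simps)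
    from this[of "real (Suc j)"] show ?thesis using assms by (simp add: add.assoc)
  qed
  ultimately have "((\<lambda>j. 1 / (real (Suc j) * real (Suc j + n))) has_sum (harm n / real n)) UNIV"
    by (intro sums_nonneg_imp_has_sum) simp_all
  then show ?thesis
    by (rule has_sum_reindex_bij_witness[where i="\<lambda>m. m - 1" and j=Suc, THEN iffD1, rotated -1]) auto
qed

text \<open>Writing \<open>H_M = \<Sum>_{k \<le> M} 1/k\<close> splits \<open>\<Sum> t^M H_M / M^4\<close> into the part \<open>k < M\<close> and the
  diagonal \<open>k = M\<close>.\<close>
lemma has_sum_harm_weighted:
  fixes t :: real
  assumes t: "\<bar>t\<bar> = 1"
  shows "((\<lambda>M. t ^ M * harm M / real M ^ 4) has_sum (zeta2 4 t 1 1 + zeta1 5 t)) {1..}"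
proof -
  define f where "f = (\<lambda>(M::nat,k::nat). t ^ M / (real M ^ 4 * real k))"
  have below: "(f has_sum zeta2 4 t 1 1) strict_pairs"
    using has_sum_zeta2[of 4 1 t 1] t by (simp add: f_def)
  have diagonal: "(f has_sum zeta1 5 t) {(n,n) | n. 1 \<le> n}"
    using has_sum_zeta1[of 5 t] t
    by (rule_tac has_sum_reindex_bij_witness[where j="\<lambda>n. (n,n)" and i=fst, THEN iffD1])
       (auto simp: f_def simp flip: power_Suc2)
  have "(f has_sum (zeta2 4 t 1 1 + zeta1 5 t)) (strict_pairs \<union> {(n,n) | n. 1 \<le> n})"
    by (intro has_sum_Un_disjoint below diagonal) (auto simp: strict_pairs_def)
  moreover have "strict_pairs \<union> {(n,n) | n. 1 \<le> n} = Sigma {1..} (\<lambda>M. {1..M})"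
    by (auto simp: strict_pairs_def)
  ultimately have "(f has_sum (zeta2 4 t 1 1 + zeta1 5 t)) (Sigma {1..} (\<lambda>M. {1..M}))"
    by simp
  moreover have "((\<lambda>k. f (M,k)) has_sum (t ^ M * harm M / real M ^ 4)) {1..M}" for M
    by (rule has_sum_finiteI) (simp_all add: f_def harm_def sum_distrib_left divide_inverse mult_ac)
  ultimately show ?thesis by (rule has_sum_Sigma')
qed

text \<open>Sum formula: \<open>\<Sum>_{m,n \<ge> 1} t^n/(m (m+n) n^3)\<close> computed via partial fractions and via the inner
  sum over \<open>m\<close>, which produces \<open>\<Sum> t^n H_n / n^4\<close>.\<close>
lemma sum_fraction:
  fixes x y c :: real
  assumes "x \<noteq> 0" "y \<noteq> 0" "x + y \<noteq> 0"
  shows "c / (x * (x+y) * y^3) = c / ((x+y)^2 * y^3) + c / ((x+y)^3 * y^2) + c / ((x+y)^4 * y) + c / ((x+y)^4 * x)"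
  using assms by (simp add: field_split_simps) algebra

lemma sum_relation:
  fixes t :: real
  assumes t: "\<bar>t\<bar> = 1"
  shows "zeta2 2 1 3 t + zeta2 3 1 2 t + zeta2 4 1 1 t + zeta2 4 t 1 t = zeta2 4 t 1 1 + zeta1 5 t"
    (is "?lhs = _")
proof -
  define S where "S = (\<lambda>(m,n). 1 ^ m * (1 * t) ^ n / (real (m + n) ^ 2 * real n ^ 3)
        + 1 ^ m * (1 * t) ^ n / (real (m + n) ^ 3 * real n ^ 2)
        + 1 ^ m * (1 * t) ^ n / (real (m + n) ^ 4 * real n ^ 1)
        + t ^ n * (t * t) ^ m / (real (m + n) ^ 4 * real m ^ 1))"
  define G where "G = (\<lambda>(n,m). t ^ n / (real m * real (m + n) * real n ^ 3))"
  have sum_S: "(S has_sum ?lhs) ({1..} \<times> {1..})"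
    unfolding S_def using t by (intro has_sum_add_pairs has_sum_zeta2_shifted) auto
  have S_eq: "S (m,n) = t ^ n / (real m * real (m + n) * real n ^ 3)" if "1 \<le> m" "1 \<le> n" for m n
    using sum_fraction[of "real m" "real n" "t ^ n"] that by (simp add: S_def sign_square[OF t])
  have "((\<lambda>(m,n). t ^ n / (real m * real (m + n) * real n ^ 3)) has_sum ?lhs) ({1..} \<times> {1..})"
    using sum_S by (rule has_sum_cong[THEN iffD1, rotated]) (auto simp: S_eq)
  then have swapped: "(G has_sum ?lhs) ({1..} \<times> {1..})"
    unfolding G_def by (subst (asm) has_sum_swap) simp
  have inner: "((\<lambda>m. G (n,m)) has_sum (t ^ n * harm n / real n ^ 4)) {1..}" if "n \<in> {1..}" for n
    using has_sum_cmult_right[OF has_sum_inverse_product[of n], of "t ^ n / real n ^ 3"] that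
    by (simp add: G_def field_simps flip: power_Suc)
  have "((\<lambda>n. t ^ n * harm n / real n ^ 4) has_sum ?lhs) {1..}"
    using has_sum_Sigma'[OF swapped inner] .
  then show ?thesis
    using has_sum_harm_weighted[OF t] has_sum_unique by blast
qed

lemma target_fraction:
  fixes x y c :: real
  assumes "x \<noteq> 0" "y \<noteq> 0" "x + y \<noteq> 0"
  shows "c / (x^2 * y * (x+y)^2) = c / ((x+y)^3 * x^2) + c / ((x+y)^4 * x) + c / ((x+y)^4 * y)"
  using assms by (simp add: field_split_simps) algebra

lemma has_sum_target:
  "((\<lambda>(m::nat, n::nat). (-1) ^ n / (real m ^ 2 * real n * real (m + n) ^ 2))
     has_sum (zeta2 3 (-1) 2 (-1) + zeta2 4 (-1) 1 (-1) + zeta2 4 1 1 (-1))) ({1..} \<times> {1..})"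
  (is "(_ has_sum ?sum) _")
proof -
  define S where "S = (\<lambda>(m,n). (-1) ^ n * ((-1) * (-1)) ^ m / (real (m + n) ^ 3 * real m ^ 2)
        + (-1) ^ n * ((-1) * (-1)) ^ m / (real (m + n) ^ 4 * real m ^ 1)
        + 1 ^ m * (1 * (-1)) ^ n / (real (m + n) ^ 4 * real n ^ 1) :: real)"
  have sum_S: "(S has_sum ?sum) ({1..} \<times> {1..})"
    unfolding S_def by (intro has_sum_add_pairs has_sum_zeta2_shifted) auto
  have S_eq: "S (m,n) = (-1) ^ n / (real m ^ 2 * real n * real (m + n) ^ 2)" if "1 \<le> m" "1 \<le> n" for m n
    using target_fraction[of "real m" "real n" "(-1) ^ n"] that by (simp add: S_def)
  show ?thesis
    using sum_S by (rule has_sum_cong[THEN iffD1, rotated]) (auto simp: S_eq)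
qed

text \<open>Second half: instantiating the relations at all signs gives a linear system whose only
  transcendental inputs are \<open>\<zeta>(5)\<close> and \<open>\<zeta>(2) \<zeta>(3)\<close>.\<close>
lemma target_value:
  "zeta2 3 (-1) 2 (-1) + zeta2 4 (-1) 1 (-1) + zeta2 4 1 1 (-1) = 107 / 32 * zeta 5 - 5 / 16 * pi ^ 2 * zeta 3"
proof -
  have zeta1_values: "zeta1 2 1 = zeta 2" "zeta1 3 1 = zeta 3" "zeta1 5 1 = zeta 5"
    "zeta1 2 (-1) = - zeta 2 / 2" "zeta1 3 (-1) = - 3 / 4 * zeta 3" "zeta1 5 (-1) = - 15 / 16 * zeta 5"
    by (simp_all add: zeta1_one zeta1_minus_one)
  then have products: "zeta1 2 1 * zeta1 3 1 = zeta 2 * zeta 3"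
    "zeta1 2 1 * zeta1 3 (-1) = - 3 / 4 * (zeta 2 * zeta 3)"
    "zeta1 2 (-1) * zeta1 3 1 = - 1 / 2 * (zeta 2 * zeta 3)"
    "zeta1 2 (-1) * zeta1 3 (-1) = 3 / 8 * (zeta 2 * zeta 3)"
    by simp_all
  have stuffles: "zeta1 2 1 * zeta1 3 1 = zeta2 2 1 3 1 + zeta2 3 1 2 1 + zeta1 5 1"
    "zeta1 2 1 * zeta1 3 (-1) = zeta2 2 1 3 (-1) + zeta2 3 (-1) 2 1 + zeta1 5 (-1)"
    "zeta1 2 (-1) * zeta1 3 1 = zeta2 2 (-1) 3 1 + zeta2 3 1 2 (-1) + zeta1 5 (-1)"
    "zeta1 2 (-1) * zeta1 3 (-1) = zeta2 2 (-1) 3 (-1) + zeta2 3 (-1) 2 (-1) + zeta1 5 1"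
    by (simp_all add: stuffle)
  have shuffles: "zeta1 2 1 * zeta1 3 1 = zeta2 2 1 3 1 + 3 * zeta2 3 1 2 1 + 6 * zeta2 4 1 1 1"
    "zeta1 2 1 * zeta1 3 (-1) = zeta2 2 1 3 (-1) + 2 * zeta2 3 1 2 (-1) + 3 * zeta2 4 1 1 (-1)
                               + zeta2 3 (-1) 2 (-1) + 3 * zeta2 4 (-1) 1 (-1)"
    "zeta1 2 (-1) * zeta1 3 1 = zeta2 2 (-1) 3 (-1) + 2 * zeta2 3 (-1) 2 (-1) + 3 * zeta2 4 (-1) 1 (-1)
                               + zeta2 3 1 2 (-1) + 3 * zeta2 4 1 1 (-1)"
    "zeta1 2 (-1) * zeta1 3 (-1) = zeta2 2 (-1) 3 1 + 3 * zeta2 3 (-1) 2 1 + 6 * zeta2 4 (-1) 1 1"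
    by (simp_all add: shuffle)
  have "zeta2 2 1 3 1 + zeta2 2 1 3 (-1) + zeta2 2 (-1) 3 1 + zeta2 2 (-1) 3 (-1) = 1 / 8 * zeta2 2 1 3 1"
    using distribution[of 2 3] by simp
  moreover have "zeta2 2 1 3 1 + zeta2 3 1 2 1 + zeta2 4 1 1 1 + zeta2 4 1 1 1 = zeta2 4 1 1 1 + zeta1 5 1"
    by (rule sum_relation) simp
  moreover have "zeta2 2 1 3 (-1) + zeta2 3 1 2 (-1) + zeta2 4 1 1 (-1) + zeta2 4 (-1) 1 (-1)
                 = zeta2 4 (-1) 1 1 + zeta1 5 (-1)"
    by (rule sum_relation) simp
  ultimately have "zeta2 3 (-1) 2 (-1) + zeta2 4 (-1) 1 (-1) + zeta2 4 1 1 (-1)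
                   = 107 / 32 * zeta 5 - 15 / 8 * (zeta 2 * zeta 3)"
    using zeta1_values products stuffles shuffles by linarith
  then show ?thesis by (simp add: zeta_two)
qed

theorem mainTheorem3:
  shows "((\<lambda>(m::nat, n::nat). (-1) ^ n / (real m ^ 2 * real n * real (m + n) ^ 2))
            has_sum (zeta_bb 3 2 + zeta_bb 4 1 + zeta_nb 4 1)) ({1..} \<times> {1..})
         \<and> zeta_bb 3 2 + zeta_bb 4 1 + zeta_nb 4 1 = 107 / 32 * zeta 5 - 5 / 16 * pi ^ 2 * zeta 3"
proof -
  have "zeta_bb 3 2 + zeta_bb 4 1 + zeta_nb 4 1 = zeta2 3 (-1) 2 (-1) + zeta2 4 (-1) 1 (-1) + zeta2 4 1 1 (-1)"
    by (simp add: zeta_bb_eq_zeta2 zeta_nb_eq_zeta2)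
  then show ?thesis
    using has_sum_target target_value by simp
qed

end
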